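(* For every $t\in(0,1)$, $$\lim_{k \to \infty} \sum_{n=0}^{\infty} (-1)^n B^n_k(t) = 0,$$ where the limit is over nonnegative integers $k$.
   Context: The Bernstein polynomials are $B^n_k(t) = \binom{n}{k} t^k (1-t)^{n-k}$ for integers $0\le k\le n$, and $B^n_k(t)=0$ for $n<k$. *)

theory Defs
  imports "HOL-Analysis.Analysis"
begin

definition bernstein :: "nat \<Rightarrow> nat \<Rightarrow> real \<Rightarrow> real" where
  "bernstein n k t = (if k \<le> n then real (n choose k) * t ^ k * (1 - t) ^ (n - k) else 0)"

end

theory Submission
  imports Defs
begin

text \<open>Reindexing by n = m + k turns the alternating sum of B^n_k(t) over n into
  (-t)^k times the negative binomial series of t - 1, whose value is
  (-t/(2 - t))^k / (2 - t). For 0 < t < 1 the ratio t/(2 - t) lies in (0,1),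
  so these values decay geometrically in k.\<close>

lemma negative_binomial_sums:
  fixes x :: real
  assumes "\<bar>x\<bar> < 1"
  shows "(\<lambda>m. real ((m + k) choose k) * x ^ m) sums (1 / (1 - x) ^ (k + 1))"
proof -
  have coeff: "(- real (k + 1) gchoose m) = (-1) ^ m * real ((m + k) choose k)" for m
  proof -
    have "(- real (k + 1) gchoose m) = (-1) ^ m * ((real (k + 1) + real m - 1) gchoose m)"
      by (rule gbinomial_minus)
    also have "real (k + 1) + real m - 1 = real (m + k)"
      by simp
    also have "(real (m + k) gchoose m) = real ((m + k) choose m)"
      by (simp add: binomial_gbinomial)
    also have "(m + k) choose m = (m + k) choose k"
      using binomial_symmetric[of m "m + k"] by simp
    finally show ?thesis .
  qed
  have "(\<lambda>m. (- real (k + 1) gchoose m) * (- x) ^ m) sums (1 + - x) powr (- real (k + 1))"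
    by (rule gen_binomial_real) (use assms in simp)
  moreover have "(1 + - x) powr (- real (k + 1)) = 1 / (1 - x) ^ (k + 1)"
    using assms by (subst powr_minus, subst powr_realpow) (auto simp: divide_inverse)
  moreover have "(- real (k + 1) gchoose m) * (- x) ^ m = real ((m + k) choose k) * x ^ m" for m
    unfolding coeff by (simp add: power_minus' mult_ac)
  ultimately show ?thesis by simp
qed

lemma bernstein_add_index:
  "bernstein (m + k) k t = real ((m + k) choose k) * t ^ k * (1 - t) ^ m"
  by (simp add: bernstein_def)

lemma alternating_bernstein_sums:
  fixes t :: real
  assumes "0 < t" and "t < 2"
  shows "(\<lambda>n. (-1) ^ n * bernstein n k t) sums ((- t / (2 - t)) ^ k / (2 - t))"
proof -
  have "(\<lambda>m. (- t) ^ k * (real ((m + k) choose k) * (t - 1) ^ m))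
      sums ((- t) ^ k * (1 / (1 - (t - 1)) ^ (k + 1)))"
    by (intro sums_mult negative_binomial_sums) (use assms in auto)
  moreover have "(- t) ^ k * (real ((m + k) choose k) * (t - 1) ^ m)
      = (-1) ^ (m + k) * bernstein (m + k) k t" for m
  proof -
    have "(t - 1) ^ m = (-1) ^ m * (1 - t) ^ m"
      using power_minus[of "1 - t" m] by simp
    then show ?thesis
      by (simp add: bernstein_add_index power_add power_minus')
  qed
  moreover have "(- t) ^ k * (1 / (1 - (t - 1)) ^ (k + 1)) = (- t / (2 - t)) ^ k / (2 - t)"
    using assms by (simp add: power_minus' power_divide field_simps)
  moreover have "(\<Sum>n<k. (-1) ^ n * bernstein n k t) = 0"
    by (simp add: bernstein_def)
  ultimately show ?thesis
    using sums_iff_shift[of "\<lambda>n. (-1) ^ n * bernstein n k t" k] by simp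
qed

theorem mainTheorem9:
  fixes t :: real
  assumes "0 < t" and "t < 1"
  shows "(\<lambda>k. \<Sum>n. (-1) ^ n * bernstein n k t) \<longlonglongrightarrow> 0"
proof -
  have ratio: "norm (- t / (2 - t)) < 1"
    using assms by (simp add: abs_if field_simps)
  have "(\<lambda>k. (- t / (2 - t)) ^ k / (2 - t)) \<longlonglongrightarrow> 0 / (2 - t)"
    by (intro tendsto_divide tendsto_const LIMSEQ_power_zero ratio) (use assms in auto)
  moreover have "(\<Sum>n. (-1) ^ n * bernstein n k t) = (- t / (2 - t)) ^ k / (2 - t)" for k
    using alternating_bernstein_sums[of t k] assms by (simp add: sums_iff)
  ultimately show ?thesis by simp
qed

end
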